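(* Let $Q$ be an absolutely continuous stochastic algorithm with Hamiltonian $H$, and suppose that for all $k\in[n]$, $h\in\mathcal{H}$, $y,y'\in\mathcal{X}$ and $\mathbf{x}\in\mathcal{X}^n$ we have $D^k_{y,y'}H(h,\mathbf{x})\le c$ and $h(y)\in[0,b]$. Then: (i) For any $\lambda>0$, $$\ln \mathbb{E}_{\mathbf{X}\sim\mu^n}\mathbb{E}_{h\sim Q_{\mathbf{X}}}\left[e^{\lambda\Delta(h,\mathbf{X})}\right]\le\sup_{h\in\mathcal{H}}\psi_{\lambda\Delta}(h)\le \frac{n}{8}\left(\frac{\lambda b}{n}+2c\right)^2.$$ (ii) For $\delta>0$, with probability at least $1-\delta$ as $\mathbf{X}\sim\mu^n$ and $h\sim Q_{\mathbf{X}}$, $$\Delta(h,\mathbf{X})\le b\left(c+\sqrt{\frac{\ln(1/\delta)}{2n}}\right).$$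
   Context: $\mathcal{X}$ is a measurable space with probability measure $\mu$, $\mathbf{X}=(X_1,\dots,X_n)\sim\mu^n$, $X\sim\mu$, and primes denote independent copies. $\mathcal{H}$ is a measurable space of measurable functions $h:\mathcal{X}\to[0,\infty)$ with nonnegative a-priori measure $\pi$. A stochastic algorithm $Q:\mathbf{x}\mapsto Q_{\mathbf{x}}$ (probability measures on $\mathcal{H}$) is absolutely continuous if each $Q_{\mathbf{x}}$ and $\pi$ are mutually absolutely continuous. A measurable $H:\mathcal{H}\times\mathcal{X}^n\to\mathbb{R}$ is a Hamiltonian for $Q$ if $dQ_{\mathbf{x}}(h)=e^{H(h,\mathbf{x})}d\pi(h)/Z(\mathbf{x})$ with $Z(\mathbf{x})=\int_{\mathcal{H}}e^{H(h,\mathbf{x})}d\pi(h)$; the canonical Hamiltonian is $H_Q=H-\ln Z=\ln(dQ_{\mathbf{x}}/d\pi)$. Generalization gap: $\Delta(h,\mathbf{x})=\mathbb{E}[h(X)]-\frac1n\sum_{i=1}^n h(x_i)$. For $F:\mathcal{H}\times\mathcal{X}^n\to\mathbb{R}$, $\psi_F(h)=\ln\mathbb{E}\left[\exp\left(F(h,\mathbf{X})+H_Q(h,\mathbf{X})-\mathbb{E}[H_Q(h,\mathbf{X}')]\right)\right]$. $S^k_y\mathbf{x}$ replaces the $k$-th coordinate of $\mathbf{x}$ by $y$; $D^k_{y,y'}G(h,\mathbf{x})=G(h,S^k_y\mathbf{x})-G(h,S^k_{y'}\mathbf{x})$. Probability "as $\mathbf{X}\sim\mu^n$ and $h\sim Q_{\mathbf{X}}$"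 is w.r.t. the joint law. All functions are assumed to have finite exponential moments of all orders. *)

theory Defs
  imports "HOL-Probability.Probability"
begin

text \<open>Samples \<open>x \<in> X^n\<close> are elements of \<open>PiM {..<n} (\<lambda>_. M)\<close>, i.e. functions on \<open>{..<n}\<close>
  (coordinates indexed \<open>0..n-1\<close>). Hypotheses are real-valued functions on the sample type;
  the hypothesis space is the measure \<open>\<pi>\<close> (its space, sigma-algebra and a-priori measure).\<close>

definition sample_space :: "nat \<Rightarrow> 'x measure \<Rightarrow> (nat \<Rightarrow> 'x) measure" where
  "sample_space n M = PiM {..<n} (\<lambda>_. M)"

definition gen_gap :: "'x measure \<Rightarrow> nat \<Rightarrow> ('x \<Rightarrow> real) \<Rightarrow> (nat \<Rightarrow> 'x) \<Rightarrow> real" where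
  "gen_gap M n h x = (\<integral>y. h y \<partial>M) - (\<Sum>i<n. h (x i)) / real n"

definition subst_coord :: "nat \<Rightarrow> 'x \<Rightarrow> (nat \<Rightarrow> 'x) \<Rightarrow> (nat \<Rightarrow> 'x)" where
  "subst_coord k y x = x(k := y)"

definition diff_op :: "nat \<Rightarrow> 'x \<Rightarrow> 'x \<Rightarrow> ('h \<Rightarrow> (nat \<Rightarrow> 'x) \<Rightarrow> real) \<Rightarrow> 'h \<Rightarrow> (nat \<Rightarrow> 'x) \<Rightarrow> real" where
  "diff_op k y y' G h x = G h (subst_coord k y x) - G h (subst_coord k y' x)"

definition abs_cont_algorithm ::
  "('h measure) \<Rightarrow> ('s measure) \<Rightarrow> ('s \<Rightarrow> 'h measure) \<Rightarrow> bool" where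
  "abs_cont_algorithm \<pi> S Q \<longleftrightarrow>
     Q \<in> measurable S (subprob_algebra \<pi>) \<and>
     (\<forall>x\<in>space S. prob_space (Q x) \<and> sets (Q x) = sets \<pi> \<and>
        absolutely_continuous \<pi> (Q x) \<and> absolutely_continuous (Q x) \<pi>)"

definition partition_fn :: "('h measure) \<Rightarrow> ('h \<Rightarrow> 's \<Rightarrow> real) \<Rightarrow> 's \<Rightarrow> ennreal" where
  "partition_fn \<pi> H x = (\<integral>\<^sup>+ h. ennreal (exp (H h x)) \<partial>\<pi>)"

definition is_hamiltonian ::
  "('h measure) \<Rightarrow> ('s measure) \<Rightarrow> ('s \<Rightarrow> 'h measure) \<Rightarrow> ('h \<Rightarrow> 's \<Rightarrow> real) \<Rightarrow> bool" where
  "is_hamiltonian \<pi> S Q H \<longleftrightarrow>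
     (\<lambda>(h, x). H h x) \<in> borel_measurable (\<pi> \<Otimes>\<^sub>M S) \<and>
     (\<forall>x\<in>space S. Q x = density \<pi> (\<lambda>h. ennreal (exp (H h x)) / partition_fn \<pi> H x))"

definition canon_hamiltonian :: "('h measure) \<Rightarrow> ('h \<Rightarrow> 's \<Rightarrow> real) \<Rightarrow> 'h \<Rightarrow> 's \<Rightarrow> real" where
  "canon_hamiltonian \<pi> H h x = H h x - ln (enn2real (partition_fn \<pi> H x))"

definition psi :: "('h measure) \<Rightarrow> ('s measure) \<Rightarrow> ('h \<Rightarrow> 's \<Rightarrow> real) \<Rightarrow> ('h \<Rightarrow> 's \<Rightarrow> real) \<Rightarrow> 'h \<Rightarrow> real" where
  "psi \<pi> S H F h = ln (\<integral>x. exp (F h x + canon_hamiltonian \<pi> H h x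
        - (\<integral>x'. canon_hamiltonian \<pi> H h x' \<partial>S)) \<partial>S)"

end

theory Submission
  imports Defs
begin

text \<open>By Fubini, the exponential moment of \<open>l \<Delta>\<close> under the joint law is an integral over \<open>\<pi>\<close>
  of \<open>E\<^sub>X exp (l \<Delta>(h, X) + H\<^sub>Q(h, X)) = exp (E H\<^sub>Q(h, X)) exp (\<psi>(h))\<close>. Bounding \<open>\<psi>\<close> by its
  supremum and \<open>exp (E H\<^sub>Q)\<close> by \<open>E exp H\<^sub>Q\<close> (Jensen) leaves \<open>\<integral> exp H\<^sub>Q d\<pi> = 1\<close>, which gives the
  first inequality. Changing one sample point moves \<open>l \<Delta>\<close> by at most \<open>l b / n\<close> and the canonical
  Hamiltonian \<open>H - ln Z\<close> by at most \<open>2 c\<close>, so McDiarmid's exponential bound (Hoeffding's lemma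
  applied one coordinate at a time) gives the second. Part (ii) is Chernoff's bound with the
  optimal \<open>l\<close>.\<close>

lemma finite_measure_integrable_bounded:
  fixes f :: "'a \<Rightarrow> real"
  assumes "finite_measure M" "f \<in> borel_measurable M" "\<And>x. x \<in> space M \<Longrightarrow> \<bar>f x\<bar> \<le> B"
  shows "integrable M f"
  using assms by (intro finite_measure.integrable_const_bound[where B=B] AE_I2) auto

lemma (in prob_space) exp_integral_le_integral_exp:
  fixes f :: "'a \<Rightarrow> real"
  assumes f: "f \<in> borel_measurable M" and bounded: "\<And>x. x \<in> space M \<Longrightarrow> \<bar>f x\<bar> \<le> B"
  shows "exp (\<integral>x. f x \<partial>M) \<le> (\<integral>x. exp (f x) \<partial>M)"
proof (rule jensens_inequality[where I=UNIV])
  show "integrable M f"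
    by (rule finite_measure_integrable_bounded[OF finite_measure_axioms f bounded])
  show "integrable M (\<lambda>x. exp (f x))"
  proof (rule finite_measure_integrable_bounded[OF finite_measure_axioms, where B="exp B"])
    show "\<bar>exp (f x)\<bar> \<le> exp B" if "x \<in> space M" for x using bounded[OF that] by simp
  qed (use f in measurable)
qed (auto simp: exp_convex)

lemma (in prob_space) integral_exp_centered_ge_1:
  fixes f :: "'a \<Rightarrow> real"
  assumes f: "f \<in> borel_measurable M" and bounded: "\<And>x. x \<in> space M \<Longrightarrow> \<bar>f x\<bar> \<le> B"
  shows "1 \<le> (\<integral>x. exp (f x - (\<integral>x. f x \<partial>M)) \<partial>M)"
proof -
  have "integrable M f"
    by (rule finite_measure_integrable_bounded[OF finite_measure_axioms f bounded])
  then have "exp (\<integral>x. f x - (\<integral>x. f x \<partial>M) \<partial>M) = 1"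
    by (simp add: prob_space)
  moreover have "exp (\<integral>x. f x - (\<integral>x. f x \<partial>M) \<partial>M) \<le> (\<integral>x. exp (f x - (\<integral>x. f x \<partial>M)) \<partial>M)"
  proof (rule exp_integral_le_integral_exp)
    show "\<bar>f x - (\<integral>x. f x \<partial>M)\<bar> \<le> B + \<bar>\<integral>x. f x \<partial>M\<bar>" if "x \<in> space M" for x
      using bounded[OF that] by linarith
  qed (use f in measurable)
  ultimately show ?thesis by simp
qed

text \<open>Hoeffding's lemma on the interval \<open>[a, a + d]\<close>, where \<open>a\<close> is the infimum of \<open>f\<close>.\<close>
lemma (in prob_space) Hoeffdings_lemma_bounded_range:
  fixes f :: "'a \<Rightarrow> real"
  assumes f[measurable]: "f \<in> borel_measurable M"
    and range: "\<And>y y'. y \<in> space M \<Longrightarrow> y' \<in> space M \<Longrightarrow> f y - f y' \<le> d"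
  shows "(\<integral>y. exp (f y - (\<integral>y. f y \<partial>M)) \<partial>M) \<le> exp (d\<^sup>2 / 8)"
proof -
  define a where "a = (INF y\<in>space M. f y)"
  obtain y0 where y0: "y0 \<in> space M" using not_empty by blast
  have "bdd_below (f ` space M)"
    using range[OF y0] by (intro bdd_belowI[where m="f y0 - d"]) (fastforce simp: algebra_simps)
  then have "f y \<in> {a..a + d}" if y: "y \<in> space M" for y
  proof -
    have "f y - d \<le> a"
      unfolding a_def using range[OF y] not_empty by (intro cINF_greatest) (auto simp: algebra_simps)
    with y \<open>bdd_below (f ` space M)\<close> show ?thesis by (auto simp: a_def intro: cINF_lower)
  qed
  then interpret interval_bounded_random_variable M f a "a + d"
    by unfold_locales (auto intro: AE_I2)
  have "(\<integral>\<^sup>+y. exp (1 * (f y - (\<integral>y. f y \<partial>M))) \<partial>M) \<le> ennreal (exp (1\<^sup>2 * (a + d - a)\<^sup>2 / 8))"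
    by (rule Hoeffdings_lemma_nn_integral) simp
  moreover have "(\<integral>y. exp (f y - (\<integral>y. f y \<partial>M)) \<partial>M)
      = enn2real (\<integral>\<^sup>+y. exp (f y - (\<integral>y. f y \<partial>M)) \<partial>M)"
    by (rule integral_eq_nn_integral) auto
  ultimately show ?thesis
    using enn2real_mono[of "\<integral>\<^sup>+y. exp (f y - (\<integral>y. f y \<partial>M)) \<partial>M" "ennreal (exp (d\<^sup>2 / 8))"]
    by simp
qed

definition bounded_differences ::
    "'i set \<Rightarrow> 'x measure \<Rightarrow> (('i \<Rightarrow> 'x) \<Rightarrow> real) \<Rightarrow> real \<Rightarrow> bool" where
  "bounded_differences I M G d \<longleftrightarrow>
     (\<forall>k\<in>I. \<forall>x\<in>space (PiM I (\<lambda>_. M)). \<forall>y\<in>space M. \<forall>y'\<in>space M.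
        G (x(k := y)) - G (x(k := y')) \<le> d)"

lemma bounded_differencesD:
  "bounded_differences I M G d \<Longrightarrow> k \<in> I \<Longrightarrow> x \<in> space (PiM I (\<lambda>_. M)) \<Longrightarrow>
    y \<in> space M \<Longrightarrow> y' \<in> space M \<Longrightarrow> G (x(k := y)) - G (x(k := y')) \<le> d"
  unfolding bounded_differences_def by blast

lemma bounded_differences_add:
  assumes F: "bounded_differences I M F d" and G: "bounded_differences I M G e"
  shows "bounded_differences I M (\<lambda>x. F x + G x) (d + e)"
  unfolding bounded_differences_def
proof (intro ballI)
  fix k x y y' assume "k \<in> I" "x \<in> space (PiM I (\<lambda>_. M))" "y \<in> space M" "y' \<in> space M"
  with bounded_differencesD[OF F] bounded_differencesD[OF G]
  have "F (x(k := y)) - F (x(k := y')) \<le> d" "G (x(k := y)) - G (x(k := y')) \<le> e"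
    by blast+
  then show "F (x(k := y)) + G (x(k := y)) - (F (x(k := y')) + G (x(k := y'))) \<le> d + e"
    by linarith
qed

lemma bounded_differences_cmult:
  assumes l: "0 \<le> l" and G: "bounded_differences I M G d"
  shows "bounded_differences I M (\<lambda>x. l * G x) (l * d)"
  unfolding bounded_differences_def
proof (intro ballI)
  fix k x y y' assume "k \<in> I" "x \<in> space (PiM I (\<lambda>_. M))" "y \<in> space M" "y' \<in> space M"
  with bounded_differencesD[OF G] have "G (x(k := y)) - G (x(k := y')) \<le> d"
    by blast
  then show "l * G (x(k := y)) - l * G (x(k := y')) \<le> l * d"
    using mult_left_mono[OF _ l] by (fastforce simp: right_diff_distrib[symmetric])
qed

lemma PiM_fun_upd_in_space:
  "x \<in> space (PiM I (\<lambda>_. M)) \<Longrightarrow> y \<in> space M \<Longrightarrow> x(k := y) \<in> space (PiM (insert k I) (\<lambda>_. M))"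
  by (auto simp: space_PiM PiE_def extensional_def)

text \<open>Move from \<open>x'\<close> to \<open>x\<close> one coordinate at a time.\<close>
lemma bounded_differences_oscillation:
  assumes I: "finite I" and G: "bounded_differences I M G d"
    and x: "x \<in> space (PiM I (\<lambda>_. M))" and x': "x' \<in> space (PiM I (\<lambda>_. M))"
  shows "G x - G x' \<le> real (card I) * d"
proof -
  have "G x - G x' \<le> real (card J) * d"
    if "finite J" "J \<subseteq> I" "x' \<in> space (PiM I (\<lambda>_. M))" "\<forall>j\<in>I - J. x j = x' j" for J x'
    using that
  proof (induction J arbitrary: x' rule: finite_induct)
    case empty
    then have "x = x'"
      using x by (intro ext) (auto simp: space_PiM PiE_def extensional_def)
    then show ?case by simp
  next
    case (insert j J)
    have j: "j \<in> I" "x j \<in> space M" "x' j \<in> space M"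
      using insert x by (auto simp: space_PiM)
    have "G x - G (x'(j := x j)) \<le> real (card J) * d"
    proof (rule insert.IH)
      show "x'(j := x j) \<in> space (PiM I (\<lambda>_. M))"
        using insert(5) j by (auto simp: space_PiM PiE_def extensional_def)
    qed (use insert in auto)
    moreover have "G (x'(j := x j)) - G x' \<le> d"
      using bounded_differencesD[OF G j(1) insert(5) j(2,3)] by simp
    ultimately show ?case using insert(1,2) by (simp add: algebra_simps)
  qed
  from this[OF I order_refl x'] show ?thesis by simp
qed

lemma bounded_differences_bounded:
  assumes M: "prob_space M" and I: "finite I" and G: "bounded_differences I M G d"
  obtains B where "\<And>x. x \<in> space (PiM I (\<lambda>_. M)) \<Longrightarrow> \<bar>G x\<bar> \<le> B"
proof -
  obtain x0 where x0: "x0 \<in> space (PiM I (\<lambda>_. M))"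
    using prob_space.not_empty[OF prob_space_PiM[OF M]] by blast
  show ?thesis
  proof
    fix x assume x: "x \<in> space (PiM I (\<lambda>_. M))"
    show "\<bar>G x\<bar> \<le> \<bar>G x0\<bar> + real (card I) * d"
      using bounded_differences_oscillation[OF I G x x0] bounded_differences_oscillation[OF I G x0 x]
      by linarith
  qed
qed

lemma measurable_PiM_insert_section:
  assumes "i \<notin> I" and G: "G \<in> borel_measurable (PiM (insert i I) (\<lambda>_. M))"
  shows "(\<lambda>(x, y). G (x(i := y))) \<in> borel_measurable (PiM I (\<lambda>_. M) \<Otimes>\<^sub>M M)"
proof -
  have "(\<lambda>(x, y). x(i := y)) \<in> measurable (PiM I (\<lambda>_. M) \<Otimes>\<^sub>M M) (PiM (insert i I) (\<lambda>_. M))"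
    using measurable_fun_upd[where I="insert i I" and J=I and i=i and M="\<lambda>_. M"
        and N="PiM I (\<lambda>_. M) \<Otimes>\<^sub>M M" and f=fst and h=snd]
    by (simp add: split_beta')
  from measurable_comp[OF this G] show ?thesis by (simp add: comp_def split_beta')
qed

lemma bounded_differences_integral_coordinate:
  assumes M: "prob_space M" and I: "finite I" "i \<notin> I"
    and G: "G \<in> borel_measurable (PiM (insert i I) (\<lambda>_. M))"
    and G_bd: "bounded_differences (insert i I) M G d"
  shows "bounded_differences I M (\<lambda>x. \<integral>y. G (x(i := y)) \<partial>M) d"
  unfolding bounded_differences_def
proof (intro ballI)
  fix k x y y' assume k: "k \<in> I" and x: "x \<in> space (PiM I (\<lambda>_. M))"
    and y: "y \<in> space M" and y': "y' \<in> space M"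
  interpret prob_space M by (rule M)
  obtain B where B: "\<And>x. x \<in> space (PiM (insert i I) (\<lambda>_. M)) \<Longrightarrow> \<bar>G x\<bar> \<le> B"
    using bounded_differences_bounded[OF M _ G_bd] I by blast
  have section_integrable: "integrable M (\<lambda>z. G (x'(i := z)))" if "x' \<in> space (PiM I (\<lambda>_. M))" for x'
  proof (rule finite_measure_integrable_bounded[OF finite_measure_axioms])
    show "(\<lambda>z. G (x'(i := z))) \<in> borel_measurable M"
      using measurable_Pair2[OF measurable_PiM_insert_section[OF I(2) G] that] by simp
    show "\<bar>G (x'(i := z))\<bar> \<le> B" if "z \<in> space M" for z
      using B PiM_fun_upd_in_space[OF \<open>x' \<in> _\<close> that] by blast
  qed
  have ki: "k \<noteq> i" and xk: "x(k := y) \<in> space (PiM I (\<lambda>_. M))" "x(k := y') \<in> space (PiM I (\<lambda>_. M))"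
    using k I x y y' by (auto simp: space_PiM PiE_def extensional_def)
  have "(\<integral>z. G ((x(k := y))(i := z)) \<partial>M) \<le> (\<integral>z. G ((x(k := y'))(i := z)) + d \<partial>M)"
  proof (rule integral_mono)
    fix z assume z: "z \<in> space M"
    show "G ((x(k := y))(i := z)) \<le> G ((x(k := y'))(i := z)) + d"
      using bounded_differencesD[OF G_bd _ PiM_fun_upd_in_space[OF x z] y y', of k] k ki
      by (simp add: fun_upd_twist)
  qed (use section_integrable[OF xk(1)] section_integrable[OF xk(2)] in auto)
  also have "\<dots> = (\<integral>z. G ((x(k := y'))(i := z)) \<partial>M) + d"
    using section_integrable[OF xk(2)] by (simp add: prob_space)
  finally show "(\<integral>z. G ((x(k := y))(i := z)) \<partial>M) - (\<integral>z. G ((x(k := y'))(i := z)) \<partial>M) \<le> d"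
    by simp
qed

text \<open>McDiarmid's bound on the exponential moment, by induction on the coordinates: integrating
  out one coordinate costs the factor \<open>exp (d\<^sup>2 / 8)\<close> of Hoeffding's lemma.\<close>
lemma mcdiarmid_exp_moment:
  fixes G :: "('i \<Rightarrow> 'x) \<Rightarrow> real"
  assumes M: "prob_space M" and I: "finite I"
    and G: "G \<in> borel_measurable (PiM I (\<lambda>_. M))" and G_bd: "bounded_differences I M G d"
  shows "(\<integral>x. exp (G x - (\<integral>x. G x \<partial>PiM I (\<lambda>_. M))) \<partial>PiM I (\<lambda>_. M)) \<le> exp (real (card I) * d\<^sup>2 / 8)"
  using I G G_bd
proof (induction I arbitrary: G rule: finite_induct)
  case empty
  then show ?case by (simp add: PiM_empty lebesgue_integral_count_space_finite)
next
  case (insert i I G)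
  let ?P = "PiM I (\<lambda>_. M)" and ?P' = "PiM (insert i I) (\<lambda>_. M)"
  interpret M: prob_space M by (rule M)
  interpret P: prob_space ?P by (rule prob_space_PiM) (simp add: M)
  interpret P': prob_space ?P' by (rule prob_space_PiM) (simp add: M)
  interpret product_sigma_finite "\<lambda>_. M"
    by (intro product_sigma_finite.intro) (rule M.sigma_finite_measure_axioms)
  note G_meas[measurable] = insert(4)
  note G_section[measurable] = measurable_PiM_insert_section[OF insert(2) insert(4)]
  define G1 where "G1 x = (\<integral>y. G (x(i := y)) \<partial>M)" for x
  have G1_meas[measurable]: "G1 \<in> borel_measurable ?P"
    unfolding G1_def by (rule M.borel_measurable_lebesgue_integral) (use G_section in simp)
  have G1_bd: "bounded_differences I M G1 d"
    unfolding G1_def by (rule bounded_differences_integral_coordinate[OF M insert(1,2,4,5)])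
  obtain B where B: "\<And>x. x \<in> space ?P' \<Longrightarrow> \<bar>G x\<bar> \<le> B"
    using bounded_differences_bounded[OF M _ insert(5)] insert(1) by blast
  obtain B1 where B1: "\<And>x. x \<in> space ?P \<Longrightarrow> \<bar>G1 x\<bar> \<le> B1"
    using bounded_differences_bounded[OF M insert(1) G1_bd] by blast
  define EG where "EG = (\<integral>x. G x \<partial>?P')"
  have EG: "EG = (\<integral>x. G1 x \<partial>?P)"
    unfolding EG_def G1_def
    by (rule product_integral_insert[OF insert(1,2)])
       (rule finite_measure_integrable_bounded[OF P'.finite_measure_axioms G_meas B])
  have coordinate_step: "(\<integral>y. exp (G (x(i := y)) - EG) \<partial>M) \<le> exp (G1 x - EG) * exp (d\<^sup>2 / 8)"
    if x: "x \<in> space ?P" for x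
  proof -
    have "(\<integral>y. exp (G (x(i := y)) - G1 x) \<partial>M) \<le> exp (d\<^sup>2 / 8)"
      unfolding G1_def
    proof (rule M.Hoeffdings_lemma_bounded_range)
      show "(\<lambda>y. G (x(i := y))) \<in> borel_measurable M"
        using measurable_Pair2[OF G_section x] by (simp add: fun_upd_def)
      show "G (x(i := y)) - G (x(i := y')) \<le> d" if "y \<in> space M" "y' \<in> space M" for y y'
        using bounded_differencesD[OF insert(5) insertI1 PiM_fun_upd_in_space[OF x that(1)] that]
        by (simp only: fun_upd_upd)
    qed
    moreover have "(\<integral>y. exp (G (x(i := y)) - EG) \<partial>M)
        = (\<integral>y. exp (G1 x - EG) * exp (G (x(i := y)) - G1 x) \<partial>M)"
      by (simp flip: exp_add)
    ultimately show ?thesis by (simp add: mult_left_mono)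
  qed
  have "(\<integral>x. exp (G x - EG) \<partial>?P') = (\<integral>x. (\<integral>y. exp (G (x(i := y)) - EG) \<partial>M) \<partial>?P)"
  proof (rule product_integral_insert[OF insert(1,2)])
    show "integrable ?P' (\<lambda>x. exp (G x - EG))"
    proof (rule finite_measure_integrable_bounded[OF P'.finite_measure_axioms])
      show "\<bar>exp (G x - EG)\<bar> \<le> exp (B + \<bar>EG\<bar>)" if "x \<in> space ?P'" for x
        using B[OF that] by simp
    qed measurable
  qed
  also have "\<dots> \<le> (\<integral>x. exp (G1 x - EG) * exp (d\<^sup>2 / 8) \<partial>?P)"
  proof (rule integral_mono'[OF _ coordinate_step])
    show "integrable ?P (\<lambda>x. exp (G1 x - EG) * exp (d\<^sup>2 / 8))"
    proof (rule finite_measure_integrable_bounded[OF P.finite_measure_axioms])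
      show "\<bar>exp (G1 x - EG) * exp (d\<^sup>2 / 8)\<bar> \<le> exp (B1 + \<bar>EG\<bar>) * exp (d\<^sup>2 / 8)"
        if "x \<in> space ?P" for x
        using B1[OF that] by simp
    qed measurable
  qed auto
  also have "\<dots> = (\<integral>x. exp (G1 x - (\<integral>x. G1 x \<partial>?P)) \<partial>?P) * exp (d\<^sup>2 / 8)"
    by (simp add: EG)
  also have "\<dots> \<le> exp (real (card I) * d\<^sup>2 / 8) * exp (d\<^sup>2 / 8)"
    using insert.IH[OF G1_meas G1_bd] by (intro mult_right_mono) auto
  also have "\<dots> = exp (real (card (insert i I)) * d\<^sup>2 / 8)"
    using insert(1,2) by (simp flip: exp_add) (simp add: field_simps)
  finally show ?case unfolding EG_def .
qed

lemma (in prob_space) chernoff_lower_bound: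
  fixes f :: "'a \<Rightarrow> real"
  assumes f[measurable]: "f \<in> borel_measurable M"
    and exp_int: "integrable M (\<lambda>x. exp (l * f x))" and l: "0 \<le> l"
  shows "1 - exp (- (l * t)) * (\<integral>x. exp (l * f x) \<partial>M) \<le> prob {x \<in> space M. f x \<le> t}"
proof -
  let ?A = "{x \<in> space M. f x \<le> t}"
  have "(\<integral>x. 1 - exp (- (l * t)) * exp (l * f x) \<partial>M) \<le> (\<integral>x. indicator ?A x \<partial>M)"
  proof (rule integral_mono)
    show "integrable M (\<lambda>x. 1 - exp (- (l * t)) * exp (l * f x))"
      using exp_int by auto
    show "integrable M (indicator ?A :: _ \<Rightarrow> real)"
      by (intro integrable_real_indicator) (auto simp: emeasure_finite less_top[symmetric])
    fix x assume x: "x \<in> space M"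
    show "1 - exp (- (l * t)) * exp (l * f x) \<le> indicator ?A x"
    proof (cases "f x \<le> t")
      case False
      then have "l * t \<le> l * f x" using l by (simp add: mult_left_mono)
      then have "1 \<le> exp (- (l * t)) * exp (l * f x)" by (simp flip: exp_add)
      then show ?thesis using False by simp
    qed (use x in simp)
  qed
  then show ?thesis
    using exp_int by (simp add: prob_space)
qed

text \<open>The choice of \<open>l\<close> minimising the Chernoff exponent.\<close>
lemma chernoff_exponent_le_ln:
  fixes n b c \<delta> :: real
  assumes n: "0 < n" and b: "0 < b" and c: "0 \<le> c" and \<delta>: "0 < \<delta>" "\<delta> < 1"
  defines "r \<equiv> sqrt (ln (1 / \<delta>) / (2 * n))"
  defines "l \<equiv> 2 * n * (c + 2 * r) / b"
  shows "0 < l" and "n / 8 * (l * b / n + 2 * c)\<^sup>2 - l * (b * (c + r)) \<le> ln \<delta>"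
proof -
  have "0 < ln (1 / \<delta>)" using \<delta> by simp
  then have r: "0 < r" and r2: "2 * n * r\<^sup>2 = ln (1 / \<delta>)"
    unfolding r_def using n by simp_all
  show "0 < l" unfolding l_def using n b c r by simp
  have "l * b / n = 2 * c + 4 * r" unfolding l_def using n b by (simp add: field_simps)
  then have "n / 8 * (l * b / n + 2 * c)\<^sup>2 - l * (b * (c + r)) = - 2 * n * r\<^sup>2 - 2 * n * r * c"
    unfolding l_def using b by (simp add: field_simps power2_eq_square)
  also have "\<dots> \<le> ln \<delta>"
    using r2 \<delta> n r c by (simp add: ln_div)
  finally show "n / 8 * (l * b / n + 2 * c)\<^sup>2 - l * (b * (c + r)) \<le> ln \<delta>" .
qed

lemma sum_fun_upd_diff:
  fixes f :: "'a \<Rightarrow> 'b::ab_group_add"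
  assumes "finite A" "k \<in> A"
  shows "(\<Sum>i\<in>A. f ((x(k := y)) i)) - (\<Sum>i\<in>A. f ((x(k := y')) i)) = f y - f y'"
proof -
  have split: "(\<Sum>i\<in>A. f ((x(k := z)) i)) = f z + (\<Sum>i\<in>A - {k}. f (x i))" for z
    using assms by (simp add: sum.remove[of A k])
  show ?thesis unfolding split by simp
qed

locale hamiltonian_algorithm =
  fixes M :: "'x measure" and \<pi> :: "('x \<Rightarrow> real) measure"
    and Q :: "(nat \<Rightarrow> 'x) \<Rightarrow> ('x \<Rightarrow> real) measure"
    and H :: "('x \<Rightarrow> real) \<Rightarrow> (nat \<Rightarrow> 'x) \<Rightarrow> real"
    and n :: nat and b c :: real
  assumes M: "prob_space M"
    and n_pos: "n > 0"
    and evaluation_measurable: "(\<lambda>(h, y). h y) \<in> borel_measurable (\<pi> \<Otimes>\<^sub>M M)"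
    and abs_cont: "abs_cont_algorithm \<pi> (sample_space n M) Q"
    and hamiltonian: "is_hamiltonian \<pi> (sample_space n M) Q H"
    and H_differences: "\<forall>k<n. \<forall>h\<in>space \<pi>. \<forall>y\<in>space M. \<forall>y'\<in>space M. \<forall>x\<in>space (sample_space n M).
           diff_op k y y' H h x \<le> c"
    and hypothesis_range: "\<forall>h\<in>space \<pi>. \<forall>y\<in>space M. 0 \<le> h y \<and> h y \<le> b"
begin

abbreviation "S \<equiv> sample_space n M"
abbreviation "Z \<equiv> partition_fn \<pi> H"
abbreviation "HQ \<equiv> canon_hamiltonian \<pi> H"
abbreviation "psi_gap l h \<equiv> psi \<pi> S H (\<lambda>h x. l * gen_gap M n h x) h"

lemma S_eq_PiM: "S = PiM {..<n} (\<lambda>_. M)"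
  by (simp add: sample_space_def)

sublocale M: prob_space M
  by (rule M)

sublocale S: prob_space S
  unfolding S_eq_PiM by (rule prob_space_PiM) (simp add: M)

lemma prob_space_Q: "x \<in> space S \<Longrightarrow> prob_space (Q x)"
  and sets_Q: "x \<in> space S \<Longrightarrow> sets (Q x) = sets \<pi>"
  and Q_measurable: "Q \<in> measurable S (subprob_algebra \<pi>)"
  using abs_cont unfolding abs_cont_algorithm_def by blast+

lemma space_Q: "x \<in> space S \<Longrightarrow> space (Q x) = space \<pi>"
  using sets_Q by (rule sets_eq_imp_space_eq)

lemma H_measurable[measurable]: "(\<lambda>(h, x). H h x) \<in> borel_measurable (\<pi> \<Otimes>\<^sub>M S)"
  and Q_eq_density: "x \<in> space S \<Longrightarrow> Q x = density \<pi> (\<lambda>h. ennreal (exp (H h x)) / Z x)"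
  using hamiltonian unfolding is_hamiltonian_def by blast+

lemma H_measurable_in_h: "x \<in> space S \<Longrightarrow> (\<lambda>h. H h x) \<in> borel_measurable \<pi>"
  using measurable_comp[OF measurable_Pair1' H_measurable] by (simp add: comp_def)

lemma fun_upd_in_S: "k < n \<Longrightarrow> x \<in> space S \<Longrightarrow> y \<in> space M \<Longrightarrow> x(k := y) \<in> space S"
  by (auto simp: S_eq_PiM space_PiM PiE_def extensional_def)

lemma component_in_space: "x \<in> space S \<Longrightarrow> i < n \<Longrightarrow> x i \<in> space M"
  by (auto simp: S_eq_PiM space_PiM)

lemma space_pi_nonempty: "space \<pi> \<noteq> {}"
proof -
  obtain x where x: "x \<in> space S" using S.not_empty by blast
  show ?thesis using prob_space.not_empty[OF prob_space_Q[OF x]] space_Q[OF x] by simp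
qed

text \<open>\<open>Q x\<close> is a probability measure, so the normalising constant must be finite and positive.\<close>
lemma Z_pos_finite: assumes x: "x \<in> space S" shows "0 < Z x" "Z x < \<infinity>"
proof -
  have "1 = emeasure (Q x) (space \<pi>)"
    using prob_space.emeasure_space_1[OF prob_space_Q[OF x]] space_Q[OF x] by simp
  also have "\<dots> = (\<integral>\<^sup>+h. ennreal (exp (H h x)) / Z x * indicator (space \<pi>) h \<partial>\<pi>)"
    unfolding Q_eq_density[OF x]
    by (rule emeasure_density) (use H_measurable_in_h[OF x] in measurable)
  also have "\<dots> = (\<integral>\<^sup>+h. ennreal (exp (H h x)) * inverse (Z x) \<partial>\<pi>)"
    by (intro nn_integral_cong) (simp add: divide_ennreal_def)
  also have "\<dots> = Z x * inverse (Z x)"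
    unfolding partition_fn_def by (rule nn_integral_multc) (use H_measurable_in_h[OF x] in measurable)
  finally have "Z x * inverse (Z x) = 1" ..
  then show "0 < Z x" "Z x < \<infinity>"
    by (auto simp: zero_less_iff_neq_zero less_top[symmetric])
qed

lemma Z_real_pos: "x \<in> space S \<Longrightarrow> 0 < enn2real (Z x)"
  using Z_pos_finite by (simp add: enn2real_positive_iff)

lemma Z_eq_ennreal: "x \<in> space S \<Longrightarrow> Z x = ennreal (enn2real (Z x))"
  using Z_pos_finite by simp

text \<open>\<open>\<pi>\<close> is not assumed sigma-finite; it follows since \<open>exp (H h x\<^sub>0)\<close> is integrable and positive.\<close>
lemma sigma_finite_pi: "sigma_finite_measure \<pi>"
proof
  obtain x0 where x0: "x0 \<in> space S" using S.not_empty by blast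
  define A where "A k = {h \<in> space \<pi>. 1 / real (Suc k) \<le> exp (H h x0)}" for k
  have A_sets: "A k \<in> sets \<pi>" for k
    unfolding A_def using H_measurable_in_h[OF x0] by measurable
  have A_finite: "emeasure \<pi> (A k) \<noteq> \<infinity>" for k
  proof -
    have "ennreal (1 / real (Suc k)) * emeasure \<pi> (A k)
        = (\<integral>\<^sup>+h. ennreal (1 / real (Suc k)) * indicator (A k) h \<partial>\<pi>)"
      using A_sets by (simp add: nn_integral_cmult_indicator)
    also have "\<dots> \<le> Z x0"
      unfolding partition_fn_def
      by (intro nn_integral_mono) (auto simp: A_def indicator_def intro!: ennreal_leI)
    also have "\<dots> < \<infinity>" using Z_pos_finite[OF x0] by simp
    finally show ?thesis by (auto simp: ennreal_mult_less_top)
  qed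
  have "(\<Union>k. A k) = space \<pi>"
  proof safe
    fix h assume h: "h \<in> space \<pi>"
    obtain k where "inverse (real (Suc k)) < exp (H h x0)"
      using reals_Archimedean[of "exp (H h x0)"] by auto
    then have "h \<in> A k" using h by (auto simp: A_def field_simps)
    then show "h \<in> (\<Union>k. A k)" by blast
  qed (auto simp: A_def)
  then show "\<exists>A. countable A \<and> A \<subseteq> sets \<pi> \<and> \<Union> A = space \<pi> \<and> (\<forall>a\<in>A. emeasure \<pi> a \<noteq> \<infinity>)"
    using A_sets A_finite by (intro exI[of _ "range A"]) auto
qed

lemma Z_measurable[measurable]: "Z \<in> borel_measurable S"
proof -
  have "(\<lambda>(x, h). H h x) \<in> borel_measurable (S \<Otimes>\<^sub>M \<pi>)"
    using measurable_comp[OF measurable_pair_swap' H_measurable] by (simp add: comp_def split_beta')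
  then show ?thesis
    unfolding partition_fn_def[abs_def]
    by (intro sigma_finite_measure.borel_measurable_nn_integral[OF sigma_finite_pi]) measurable
qed

lemma HQ_measurable[measurable]: "(\<lambda>(h, x). HQ h x) \<in> borel_measurable (\<pi> \<Otimes>\<^sub>M S)"
  unfolding canon_hamiltonian_def by measurable

lemma HQ_measurable_in_h: "x \<in> space S \<Longrightarrow> (\<lambda>h. HQ h x) \<in> borel_measurable \<pi>"
  using measurable_comp[OF measurable_Pair1' HQ_measurable] by (simp add: comp_def)

lemma HQ_measurable_in_x: "h \<in> space \<pi> \<Longrightarrow> HQ h \<in> borel_measurable S"
  using measurable_Pair2[OF HQ_measurable] by simp

lemma Q_eq_density_HQ: assumes x: "x \<in> space S"
  shows "Q x = density \<pi> (\<lambda>h. ennreal (exp (HQ h x)))"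
proof -
  have "ennreal (exp (H h x)) / Z x = ennreal (exp (H h x) / enn2real (Z x))" for h
    using Z_real_pos[OF x] by (subst Z_eq_ennreal[OF x]) (simp add: divide_ennreal)
  also have "exp (H h x) / enn2real (Z x) = exp (HQ h x)" for h
    using Z_real_pos[OF x] by (simp add: canon_hamiltonian_def exp_diff)
  finally have "ennreal (exp (H h x)) / Z x = ennreal (exp (HQ h x))" for h .
  then show ?thesis using Q_eq_density[OF x] by simp
qed

lemma nn_integral_exp_HQ: assumes x: "x \<in> space S"
  shows "(\<integral>\<^sup>+h. ennreal (exp (HQ h x)) \<partial>\<pi>) = 1"
proof -
  have "(\<integral>\<^sup>+h. ennreal (exp (HQ h x)) \<partial>\<pi>) = (\<integral>\<^sup>+h. ennreal (exp (HQ h x)) * indicator (space \<pi>) h \<partial>\<pi>)"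
    by (intro nn_integral_cong) simp
  also have "\<dots> = emeasure (Q x) (space \<pi>)"
    unfolding Q_eq_density_HQ[OF x]
    by (rule emeasure_density[symmetric]) (use HQ_measurable_in_h[OF x] in measurable)
  also have "\<dots> = 1"
    using prob_space.emeasure_space_1[OF prob_space_Q[OF x]] space_Q[OF x] by simp
  finally show ?thesis .
qed

lemma H_fun_upd_le:
  "k < n \<Longrightarrow> h \<in> space \<pi> \<Longrightarrow> x \<in> space S \<Longrightarrow> y \<in> space M \<Longrightarrow> y' \<in> space M \<Longrightarrow>
    H h (x(k := y)) \<le> H h (x(k := y')) + c"
  using H_differences unfolding diff_op_def subst_coord_def by fastforce

lemma c_nonneg: "0 \<le> c"
proof -
  obtain h y x where "h \<in> space \<pi>" "y \<in> space M" "x \<in> space S"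
    using space_pi_nonempty M.not_empty S.not_empty by blast
  then show ?thesis using H_fun_upd_le[OF n_pos, of h x y y] by simp
qed

lemma Z_fun_upd_le:
  assumes k: "k < n" and x: "x \<in> space S" and y: "y \<in> space M" and y': "y' \<in> space M"
  shows "enn2real (Z (x(k := y))) \<le> exp c * enn2real (Z (x(k := y')))"
proof -
  have x': "x(k := y') \<in> space S" using fun_upd_in_S[OF k x y'] .
  have "Z (x(k := y)) \<le> (\<integral>\<^sup>+h. ennreal (exp c) * ennreal (exp (H h (x(k := y')))) \<partial>\<pi>)"
    unfolding partition_fn_def
  proof (intro nn_integral_mono)
    fix h assume h: "h \<in> space \<pi>"
    have "exp (H h (x(k := y))) \<le> exp (c + H h (x(k := y')))"
      using H_fun_upd_le[OF k h x y y'] by simp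
    then show "ennreal (exp (H h (x(k := y)))) \<le> ennreal (exp c) * ennreal (exp (H h (x(k := y'))))"
      by (simp add: exp_add ennreal_leI flip: ennreal_mult)
  qed
  also have "\<dots> = ennreal (exp c) * Z (x(k := y'))"
    unfolding partition_fn_def
    by (rule nn_integral_cmult) (use H_measurable_in_h[OF x'] in measurable)
  also have "\<dots> = ennreal (exp c * enn2real (Z (x(k := y'))))"
    by (subst Z_eq_ennreal[OF x']) (simp add: ennreal_mult)
  finally show ?thesis
    using Z_real_pos[OF x']
    by (subst (asm) Z_eq_ennreal[OF fun_upd_in_S[OF k x y]]) (simp add: ennreal_le_iff)
qed

text \<open>Changing one coordinate moves \<open>H\<close> by at most \<open>c\<close> and \<open>ln Z\<close> by at most \<open>c\<close>.\<close>
lemma HQ_bounded_differences: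
  assumes h: "h \<in> space \<pi>" shows "bounded_differences {..<n} M (HQ h) (2 * c)"
  unfolding bounded_differences_def S_eq_PiM[symmetric]
proof (intro ballI)
  fix k x y y' assume "k \<in> {..<n}" and x: "x \<in> space S" and y: "y \<in> space M" and y': "y' \<in> space M"
  then have k: "k < n" by simp
  have "ln (enn2real (Z (x(k := y')))) \<le> ln (exp c * enn2real (Z (x(k := y))))"
    using Z_fun_upd_le[OF k x y' y] Z_real_pos[OF fun_upd_in_S[OF k x y']]
      Z_real_pos[OF fun_upd_in_S[OF k x y]]
    by simp
  also have "\<dots> = c + ln (enn2real (Z (x(k := y))))"
    using Z_real_pos[OF fun_upd_in_S[OF k x y]] by (simp add: ln_mult)
  finally show "HQ h (x(k := y)) - HQ h (x(k := y')) \<le> 2 * c"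
    using H_fun_upd_le[OF k h x y y'] unfolding canon_hamiltonian_def by simp
qed

lemma HQ_bounded:
  assumes h: "h \<in> space \<pi>" obtains B where "\<And>x. x \<in> space S \<Longrightarrow> \<bar>HQ h x\<bar> \<le> B"
  using bounded_differences_bounded[OF M _ HQ_bounded_differences[OF h]] by (auto simp: S_eq_PiM)

lemma hypothesis_measurable: "h \<in> space \<pi> \<Longrightarrow> h \<in> borel_measurable M"
  using measurable_Pair2[OF evaluation_measurable] by simp

lemma hypothesis_bounds: "h \<in> space \<pi> \<Longrightarrow> y \<in> space M \<Longrightarrow> 0 \<le> h y \<and> h y \<le> b"
  using hypothesis_range by blast

lemma hypothesis_integrable: "h \<in> space \<pi> \<Longrightarrow> integrable M h"
  using hypothesis_bounds
  by (intro finite_measure_integrable_bounded[OF M.finite_measure_axioms hypothesis_measurable,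
        where B=b])
     (auto simp: abs_le_iff)

lemma gen_gap_abs_le:
  assumes h: "h \<in> space \<pi>" and x: "x \<in> space S" shows "\<bar>gen_gap M n h x\<bar> \<le> b"
proof -
  have "0 \<le> (\<integral>y. h y \<partial>M)"
    using hypothesis_bounds[OF h] by (auto intro: integral_nonneg)
  moreover have "(\<integral>y. h y \<partial>M) \<le> (\<integral>y. b \<partial>M)"
    using hypothesis_bounds[OF h] by (intro integral_mono hypothesis_integrable[OF h]) auto
  moreover have "0 \<le> (\<Sum>i<n. h (x i)) / real n"
    using hypothesis_bounds[OF h component_in_space[OF x]]
    by (intro divide_nonneg_nonneg sum_nonneg) auto
  moreover have "(\<Sum>i<n. h (x i)) \<le> real n * b"
    using hypothesis_bounds[OF h component_in_space[OF x]] sum_bounded_above[of "{..<n}" "\<lambda>i. h (x i)" b]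
    by auto
  then have "(\<Sum>i<n. h (x i)) / real n \<le> b"
    using n_pos by (simp add: divide_le_eq mult.commute)
  ultimately show ?thesis
    unfolding gen_gap_def by (auto simp: M.prob_space abs_le_iff)
qed

lemma gen_gap_bounded_differences:
  assumes h: "h \<in> space \<pi>" shows "bounded_differences {..<n} M (gen_gap M n h) (b / real n)"
  unfolding bounded_differences_def S_eq_PiM[symmetric]
proof (intro ballI)
  fix k x y y' assume "k \<in> {..<n}" and "x \<in> space S" and y: "y \<in> space M" and y': "y' \<in> space M"
  then have k: "k < n" by simp
  have "gen_gap M n h (x(k := y)) - gen_gap M n h (x(k := y'))
      = ((\<Sum>i<n. h ((x(k := y')) i)) - (\<Sum>i<n. h ((x(k := y)) i))) / real n"
    unfolding gen_gap_def by (simp only: diff_divide_distrib)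
  also have "\<dots> = (h y' - h y) / real n"
    using k by (subst sum_fun_upd_diff) auto
  also have "\<dots> \<le> b / real n"
    using hypothesis_bounds[OF h y] hypothesis_bounds[OF h y'] by (intro divide_right_mono) auto
  finally show "gen_gap M n h (x(k := y)) - gen_gap M n h (x(k := y')) \<le> b / real n" .
qed

lemma component_measurable: "i < n \<Longrightarrow> (\<lambda>x. x i) \<in> measurable S M"
  unfolding S_eq_PiM by (rule measurable_component_singleton) simp

lemma gen_gap_measurable[measurable]: "(\<lambda>(h, x). gen_gap M n h x) \<in> borel_measurable (\<pi> \<Otimes>\<^sub>M S)"
proof -
  have "(\<lambda>h. \<integral>y. h y \<partial>M) \<in> borel_measurable \<pi>"
    using M.borel_measurable_lebesgue_integral[OF evaluation_measurable] by simp
  moreover have "(\<lambda>p. fst p (snd p i)) \<in> borel_measurable (\<pi> \<Otimes>\<^sub>M S)" if "i < n" for i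
  proof -
    have "(\<lambda>p. (fst p, snd p i)) \<in> measurable (\<pi> \<Otimes>\<^sub>M S) (\<pi> \<Otimes>\<^sub>M M)"
      using component_measurable[OF that] by measurable
    from measurable_comp[OF this evaluation_measurable] show ?thesis by (simp add: comp_def split_beta')
  qed
  ultimately show ?thesis
    unfolding gen_gap_def split_beta' by measurable
qed

lemma gen_gap_measurable_in_h: "x \<in> space S \<Longrightarrow> (\<lambda>h. gen_gap M n h x) \<in> borel_measurable \<pi>"
  using measurable_comp[OF measurable_Pair1' gen_gap_measurable] by (simp add: comp_def)

lemma gen_gap_measurable_in_x: "h \<in> space \<pi> \<Longrightarrow> gen_gap M n h \<in> borel_measurable S"
  using measurable_Pair2[OF gen_gap_measurable] by simp

lemma integral_gen_gap: assumes h: "h \<in> space \<pi>" shows "(\<integral>x. gen_gap M n h x \<partial>S) = 0"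
proof -
  have component: "integrable S (\<lambda>x. h (x i)) \<and> (\<integral>x. h (x i) \<partial>S) = (\<integral>y. h y \<partial>M)" if i: "i < n" for i
  proof -
    have "distr S M (\<lambda>x. x i) = M"
      using distr_PiM_component[of "{..<n}" "\<lambda>_. M" i] M i by (simp add: S_eq_PiM)
    then show ?thesis
      using hypothesis_integrable[OF h] hypothesis_measurable[OF h] component_measurable[OF i]
      by (metis integrable_distr_eq integral_distr)
  qed
  then have "(\<integral>x. (\<Sum>i<n. h (x i)) / real n \<partial>S) = (\<integral>y. h y \<partial>M)"
    using n_pos by (simp add: integral_sum)
  moreover have "integrable S (\<lambda>x. (\<Sum>i<n. h (x i)) / real n)"
    using component by (intro integrable_divide integrable_sum) auto
  ultimately show ?thesis
    unfolding gen_gap_def by (simp add: S.prob_space)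
qed

lemma tilted_measurable: "h \<in> space \<pi> \<Longrightarrow> (\<lambda>x. l * gen_gap M n h x + HQ h x) \<in> borel_measurable S"
  using gen_gap_measurable_in_x HQ_measurable_in_x by measurable

lemma tilted_bounded_differences:
  "h \<in> space \<pi> \<Longrightarrow> 0 \<le> l \<Longrightarrow>
    bounded_differences {..<n} M (\<lambda>x. l * gen_gap M n h x + HQ h x) (l * b / real n + 2 * c)"
  using bounded_differences_add[OF bounded_differences_cmult[OF _ gen_gap_bounded_differences]
      HQ_bounded_differences]
  by simp

lemma tilted_bounded:
  assumes "h \<in> space \<pi>" "0 \<le> l"
  obtains B where "\<And>x. x \<in> space S \<Longrightarrow> \<bar>l * gen_gap M n h x + HQ h x\<bar> \<le> B"
  using bounded_differences_bounded[OF M _ tilted_bounded_differences[OF assms]] by (auto simp: S_eq_PiM)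

lemma integral_tilted:
  assumes h: "h \<in> space \<pi>"
  shows "(\<integral>x. l * gen_gap M n h x + HQ h x \<partial>S) = (\<integral>x. HQ h x \<partial>S)"
proof -
  obtain B where "\<And>x. x \<in> space S \<Longrightarrow> \<bar>HQ h x\<bar> \<le> B" using HQ_bounded[OF h] by blast
  then have "integrable S (HQ h)"
    by (rule finite_measure_integrable_bounded[OF S.finite_measure_axioms HQ_measurable_in_x[OF h]])
  moreover have "integrable S (gen_gap M n h)"
    using gen_gap_abs_le[OF h]
    by (rule finite_measure_integrable_bounded[OF S.finite_measure_axioms gen_gap_measurable_in_x[OF h]])
  ultimately show ?thesis
    using integral_gen_gap[OF h] by simp
qed

lemma psi_gap_eq:
  assumes h: "h \<in> space \<pi>"
  shows "psi_gap l h = ln (\<integral>x. exp (l * gen_gap M n h x + HQ h x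
            - (\<integral>x. l * gen_gap M n h x + HQ h x \<partial>S)) \<partial>S)"
  unfolding psi_def integral_tilted[OF h] ..

lemma psi_gap_nonneg:
  assumes h: "h \<in> space \<pi>" and l: "0 \<le> l" shows "0 \<le> psi_gap l h"
proof -
  obtain B where B: "\<And>x. x \<in> space S \<Longrightarrow> \<bar>l * gen_gap M n h x + HQ h x\<bar> \<le> B"
    using tilted_bounded[OF h l] by blast
  show ?thesis
    unfolding psi_gap_eq[OF h] using S.integral_exp_centered_ge_1[OF tilted_measurable[OF h] B] by simp
qed

lemma psi_gap_le:
  assumes h: "h \<in> space \<pi>" and l: "0 \<le> l"
  shows "psi_gap l h \<le> real n / 8 * (l * b / real n + 2 * c)\<^sup>2"
proof -
  obtain B where B: "\<And>x. x \<in> space S \<Longrightarrow> \<bar>l * gen_gap M n h x + HQ h x\<bar> \<le> B"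
    using tilted_bounded[OF h l] by blast
  have "(\<integral>x. exp (l * gen_gap M n h x + HQ h x - (\<integral>x. l * gen_gap M n h x + HQ h x \<partial>S)) \<partial>S)
      \<le> exp (real n * (l * b / real n + 2 * c)\<^sup>2 / 8)"
    using mcdiarmid_exp_moment[OF M _ _ tilted_bounded_differences[OF h l]] tilted_measurable[OF h]
    by (simp add: S_eq_PiM)
  moreover have "1 \<le> (\<integral>x. exp (l * gen_gap M n h x + HQ h x - (\<integral>x. l * gen_gap M n h x + HQ h x \<partial>S)) \<partial>S)"
    using S.integral_exp_centered_ge_1[OF tilted_measurable[OF h] B] .
  ultimately show ?thesis
    unfolding psi_gap_eq[OF h] using ln_mono by fastforce
qed

lemma integral_exp_tilted:
  assumes h: "h \<in> space \<pi>" and l: "0 \<le> l"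
  shows "(\<integral>x. exp (l * gen_gap M n h x + HQ h x) \<partial>S) = exp (\<integral>x. HQ h x \<partial>S) * exp (psi_gap l h)"
proof -
  obtain B where B: "\<And>x. x \<in> space S \<Longrightarrow> \<bar>l * gen_gap M n h x + HQ h x\<bar> \<le> B"
    using tilted_bounded[OF h l] by blast
  have "0 < (\<integral>x. exp (l * gen_gap M n h x + HQ h x - (\<integral>x. HQ h x \<partial>S)) \<partial>S)"
    using S.integral_exp_centered_ge_1[OF tilted_measurable[OF h] B] integral_tilted[OF h] by simp
  then show ?thesis
    unfolding psi_gap_eq[OF h] integral_tilted[OF h]
    by (simp flip: integral_mult_right_zero exp_add)
qed

lemma psi_gap_le_SUP:
  assumes "h \<in> space \<pi>" "0 \<le> l" shows "psi_gap l h \<le> (SUP h\<in>space \<pi>. psi_gap l h)"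
  using assms psi_gap_le[OF _ assms(2)]
  by (intro cSUP_upper bdd_aboveI2[where M="real n / 8 * (l * b / real n + 2 * c)\<^sup>2"]) auto

lemma SUP_psi_gap_le:
  "0 \<le> l \<Longrightarrow> (SUP h\<in>space \<pi>. psi_gap l h) \<le> real n / 8 * (l * b / real n + 2 * c)\<^sup>2"
  using space_pi_nonempty psi_gap_le by (intro cSUP_least) auto

lemma SUP_psi_gap_nonneg: assumes "0 \<le> l" shows "0 \<le> (SUP h\<in>space \<pi>. psi_gap l h)"
proof -
  obtain h where "h \<in> space \<pi>" using space_pi_nonempty by blast
  then show ?thesis using psi_gap_nonneg psi_gap_le_SUP assms by (meson order_trans)
qed

lemma gen_gap_measurable_in_h_Q:
  "x \<in> space S \<Longrightarrow> (\<lambda>h. gen_gap M n h x) \<in> borel_measurable (Q x)"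
  using gen_gap_measurable_in_h measurable_cong_sets[OF sets_Q refl] by blast

lemma exp_gen_gap_le:
  "h \<in> space \<pi> \<Longrightarrow> x \<in> space S \<Longrightarrow> 0 \<le> l \<Longrightarrow> exp (l * gen_gap M n h x) \<le> exp (l * b)"
  using gen_gap_abs_le by (simp add: mult_left_mono abs_le_iff)

lemma integral_Q_exp_gap_le:
  assumes x: "x \<in> space S" and l: "0 \<le> l"
  shows "(\<integral>h. exp (l * gen_gap M n h x) \<partial>Q x) \<le> exp (l * b)"
proof -
  interpret Q: prob_space "Q x" by (rule prob_space_Q[OF x])
  have "exp (l * gen_gap M n h x) \<le> exp (l * b)" if "h \<in> space (Q x)" for h
    using exp_gen_gap_le that x l space_Q[OF x] by simp
  then have "(\<integral>h. exp (l * gen_gap M n h x) \<partial>Q x) \<le> (\<integral>h. exp (l * b) \<partial>Q x)"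
    by (intro integral_mono') auto
  then show ?thesis by (simp add: Q.prob_space)
qed

lemma integral_Q_exp_gap_eq:
  assumes x: "x \<in> space S"
  shows "(\<integral>h. exp (l * gen_gap M n h x) \<partial>Q x)
    = enn2real (\<integral>\<^sup>+h. ennreal (exp (l * gen_gap M n h x + HQ h x)) \<partial>\<pi>)"
proof -
  have "(\<integral>h. exp (l * gen_gap M n h x) \<partial>Q x) = enn2real (\<integral>\<^sup>+h. ennreal (exp (l * gen_gap M n h x)) \<partial>Q x)"
    by (rule integral_eq_nn_integral) (use gen_gap_measurable_in_h_Q[OF x] in auto)
  also have "(\<integral>\<^sup>+h. ennreal (exp (l * gen_gap M n h x)) \<partial>Q x)
      = (\<integral>\<^sup>+h. ennreal (exp (HQ h x)) * ennreal (exp (l * gen_gap M n h x)) \<partial>\<pi>)"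
    unfolding Q_eq_density_HQ[OF x]
    by (rule nn_integral_density)
       (use HQ_measurable_in_h[OF x] gen_gap_measurable_in_h[OF x] in measurable)
  also have "\<dots> = (\<integral>\<^sup>+h. ennreal (exp (l * gen_gap M n h x + HQ h x)) \<partial>\<pi>)"
    by (intro nn_integral_cong) (simp add: exp_add mult.commute flip: ennreal_mult)
  finally show ?thesis .
qed

lemma integral_Q_exp_gap_measurable:
  "(\<lambda>x. \<integral>h. exp (l * gen_gap M n h x) \<partial>Q x) \<in> borel_measurable S"
proof -
  have "(\<lambda>(x, h). ennreal (exp (l * gen_gap M n h x))) \<in> borel_measurable (S \<Otimes>\<^sub>M \<pi>)"
    using measurable_comp[OF measurable_pair_swap' gen_gap_measurable] by (simp add: comp_def split_beta')
  from nn_integral_measurable_subprob_algebra2[OF this Q_measurable]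
  have "(\<lambda>x. enn2real (\<integral>\<^sup>+h. ennreal (exp (l * gen_gap M n h x)) \<partial>Q x)) \<in> borel_measurable S"
    by measurable
  moreover have "enn2real (\<integral>\<^sup>+h. ennreal (exp (l * gen_gap M n h x)) \<partial>Q x)
      = (\<integral>h. exp (l * gen_gap M n h x) \<partial>Q x)" if x: "x \<in> space S" for x
    by (rule integral_eq_nn_integral[symmetric]) (use gen_gap_measurable_in_h_Q[OF x] in auto)
  ultimately show ?thesis
    by (rule measurable_cong[THEN iffD1, rotated])
qed

lemma integral_Q_exp_gap_integrable:
  "0 \<le> l \<Longrightarrow> integrable S (\<lambda>x. \<integral>h. exp (l * gen_gap M n h x) \<partial>Q x)"
  using integral_Q_exp_gap_le
  by (intro finite_measure_integrable_bounded[OF S.finite_measure_axioms integral_Q_exp_gap_measurable])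
     (auto intro: integral_nonneg)

lemma nn_integral_exp_tilted_le:
  assumes h: "h \<in> space \<pi>" and l: "0 \<le> l"
  shows "(\<integral>\<^sup>+x. ennreal (exp (l * gen_gap M n h x + HQ h x)) \<partial>S)
    \<le> ennreal (exp (SUP h\<in>space \<pi>. psi_gap l h)) * (\<integral>\<^sup>+x. ennreal (exp (HQ h x)) \<partial>S)"
proof -
  obtain B where B: "\<And>x. x \<in> space S \<Longrightarrow> \<bar>l * gen_gap M n h x + HQ h x\<bar> \<le> B"
    using tilted_bounded[OF h l] by blast
  obtain B' where B': "\<And>x. x \<in> space S \<Longrightarrow> \<bar>HQ h x\<bar> \<le> B'"
    using HQ_bounded[OF h] by blast
  have "(\<integral>\<^sup>+x. ennreal (exp (l * gen_gap M n h x + HQ h x)) \<partial>S)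
      = ennreal (exp (\<integral>x. HQ h x \<partial>S) * exp (psi_gap l h))"
    using B tilted_measurable[OF h]
    by (subst nn_integral_eq_integral)
       (auto simp: integral_exp_tilted[OF h l] abs_le_iff
             intro!: finite_measure_integrable_bounded[OF S.finite_measure_axioms, where B="exp B"])
  also have "\<dots> \<le> ennreal ((\<integral>x. exp (HQ h x) \<partial>S) * exp (SUP h\<in>space \<pi>. psi_gap l h))"
    using S.exp_integral_le_integral_exp[OF HQ_measurable_in_x[OF h] B'] psi_gap_le_SUP[OF h l]
    by (intro ennreal_leI mult_mono) (auto intro: integral_nonneg)
  also have "\<dots> = ennreal (exp (SUP h\<in>space \<pi>. psi_gap l h)) * (\<integral>\<^sup>+x. ennreal (exp (HQ h x)) \<partial>S)"
    using B' HQ_measurable_in_x[OF h]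
    by (subst nn_integral_eq_integral)
       (auto simp: ennreal_mult' mult.commute abs_le_iff intro!: integral_nonneg
             finite_measure_integrable_bounded[OF S.finite_measure_axioms, where B="exp B'"])
  finally show ?thesis .
qed

text \<open>Fubini turns the mixture over \<open>Q\<close> into an integral over \<open>\<pi>\<close> of moments over the sample;
  the remaining factor integrates \<open>exp HQ\<close>, which has total mass one.\<close>
lemma integral_exp_gap_le_exp_SUP_psi:
  assumes l: "0 \<le> l"
  shows "(\<integral>x. (\<integral>h. exp (l * gen_gap M n h x) \<partial>Q x) \<partial>S) \<le> exp (SUP h\<in>space \<pi>. psi_gap l h)"
proof -
  interpret pair_sigma_finite \<pi> S
    by (intro pair_sigma_finite.intro sigma_finite_pi S.sigma_finite_measure_axioms)
  let ?s = "SUP h\<in>space \<pi>. psi_gap l h"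
  have "ennreal (\<integral>x. (\<integral>h. exp (l * gen_gap M n h x) \<partial>Q x) \<partial>S)
      = (\<integral>\<^sup>+x. ennreal (\<integral>h. exp (l * gen_gap M n h x) \<partial>Q x) \<partial>S)"
    by (rule nn_integral_eq_integral[symmetric, OF integral_Q_exp_gap_integrable[OF l]])
       (auto intro: integral_nonneg)
  also have "\<dots> \<le> (\<integral>\<^sup>+x. (\<integral>\<^sup>+h. ennreal (exp (l * gen_gap M n h x + HQ h x)) \<partial>\<pi>) \<partial>S)"
    by (intro nn_integral_mono) (simp add: integral_Q_exp_gap_eq ennreal_enn2real_if)
  also have "\<dots> = (\<integral>\<^sup>+h. (\<integral>\<^sup>+x. ennreal (exp (l * gen_gap M n h x + HQ h x)) \<partial>S) \<partial>\<pi>)"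
    by (rule Fubini') measurable
  also have "\<dots> \<le> (\<integral>\<^sup>+h. ennreal (exp ?s) * (\<integral>\<^sup>+x. ennreal (exp (HQ h x)) \<partial>S) \<partial>\<pi>)"
    by (intro nn_integral_mono nn_integral_exp_tilted_le l)
  also have "\<dots> = ennreal (exp ?s) * (\<integral>\<^sup>+x. (\<integral>\<^sup>+h. ennreal (exp (HQ h x)) \<partial>\<pi>) \<partial>S)"
    by (subst Fubini') (measurable, rule nn_integral_cmult, measurable)
  also have "\<dots> = ennreal (exp ?s)"
    by (simp add: nn_integral_exp_HQ S.emeasure_space_1 cong: nn_integral_cong)
  finally show ?thesis by (simp add: ennreal_le_iff)
qed

lemma ln_integral_exp_gap_le_SUP_psi:
  assumes l: "0 \<le> l"
  shows "ln (\<integral>x. (\<integral>h. exp (l * gen_gap M n h x) \<partial>Q x) \<partial>S) \<le> (SUP h\<in>space \<pi>. psi_gap l h)"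
proof (cases "(\<integral>x. (\<integral>h. exp (l * gen_gap M n h x) \<partial>Q x) \<partial>S) = 0")
  case True
  then show ?thesis using SUP_psi_gap_nonneg[OF l] by simp
next
  case False
  moreover have "0 \<le> (\<integral>x. (\<integral>h. exp (l * gen_gap M n h x) \<partial>Q x) \<partial>S)"
    by (simp add: integral_nonneg)
  ultimately have "0 < (\<integral>x. (\<integral>h. exp (l * gen_gap M n h x) \<partial>Q x) \<partial>S)"
    by linarith
  then show ?thesis
    using ln_mono[OF integral_exp_gap_le_exp_SUP_psi[OF l]] by simp
qed

lemma prob_Q_gap_le_measurable:
  "(\<lambda>x. measure (Q x) {h \<in> space \<pi>. gen_gap M n h x \<le> t}) \<in> borel_measurable S"
proof -
  have "(\<lambda>(x, h). ennreal (if gen_gap M n h x \<le> t then 1 else 0)) \<in> borel_measurable (S \<Otimes>\<^sub>M \<pi>)"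
    using measurable_comp[OF measurable_pair_swap' gen_gap_measurable]
    by (simp add: comp_def split_beta') measurable
  from nn_integral_measurable_subprob_algebra2[OF this Q_measurable]
  have "(\<lambda>x. enn2real (\<integral>\<^sup>+h. ennreal (if gen_gap M n h x \<le> t then 1 else 0) \<partial>Q x)) \<in> borel_measurable S"
    by measurable
  moreover have "enn2real (\<integral>\<^sup>+h. ennreal (if gen_gap M n h x \<le> t then 1 else 0) \<partial>Q x)
      = measure (Q x) {h \<in> space \<pi>. gen_gap M n h x \<le> t}" if x: "x \<in> space S" for x
  proof -
    have "{h \<in> space \<pi>. gen_gap M n h x \<le> t} \<in> sets (Q x)"
      using gen_gap_measurable_in_h[OF x] sets_Q[OF x] by measurable
    moreover have "(\<integral>\<^sup>+h. ennreal (if gen_gap M n h x \<le> t then 1 else 0) \<partial>Q x)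
        = (\<integral>\<^sup>+h. indicator {h \<in> space \<pi>. gen_gap M n h x \<le> t} h \<partial>Q x)"
      using space_Q[OF x] by (intro nn_integral_cong) (simp add: indicator_def)
    ultimately show ?thesis by (simp add: measure_def)
  qed
  ultimately show ?thesis
    by (rule measurable_cong[THEN iffD1, rotated])
qed

lemma integral_prob_Q_gap_le_lower_bound:
  assumes l: "0 \<le> l"
  shows "1 - exp (- (l * t)) * (\<integral>x. (\<integral>h. exp (l * gen_gap M n h x) \<partial>Q x) \<partial>S)
    \<le> (\<integral>x. measure (Q x) {h \<in> space \<pi>. gen_gap M n h x \<le> t} \<partial>S)"
proof -
  have "1 - exp (- (l * t)) * (\<integral>x. (\<integral>h. exp (l * gen_gap M n h x) \<partial>Q x) \<partial>S)
      = (\<integral>x. 1 - exp (- (l * t)) * (\<integral>h. exp (l * gen_gap M n h x) \<partial>Q x) \<partial>S)"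
    using integral_Q_exp_gap_integrable[OF l] by (simp add: S.prob_space)
  also have "\<dots> \<le> (\<integral>x. measure (Q x) {h \<in> space \<pi>. gen_gap M n h x \<le> t} \<partial>S)"
  proof (rule integral_mono)
    show "integrable S (\<lambda>x. 1 - exp (- (l * t)) * (\<integral>h. exp (l * gen_gap M n h x) \<partial>Q x))"
      using integral_Q_exp_gap_integrable[OF l] by simp
    show "integrable S (\<lambda>x. measure (Q x) {h \<in> space \<pi>. gen_gap M n h x \<le> t})"
      by (rule finite_measure_integrable_bounded[OF S.finite_measure_axioms prob_Q_gap_le_measurable,
            where B=1])
         (simp add: prob_space.prob_le_1[OF prob_space_Q])
    fix x assume x: "x \<in> space S"
    interpret Q: prob_space "Q x" by (rule prob_space_Q[OF x])
    show "1 - exp (- (l * t)) * (\<integral>h. exp (l * gen_gap M n h x) \<partial>Q x)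
        \<le> measure (Q x) {h \<in> space \<pi>. gen_gap M n h x \<le> t}"
    proof (rule Q.chernoff_lower_bound[OF gen_gap_measurable_in_h_Q[OF x] _ l, where t=t,
        unfolded space_Q[OF x]])
      have "\<bar>exp (l * gen_gap M n h x)\<bar> \<le> exp (l * b)" if "h \<in> space (Q x)" for h
        using exp_gen_gap_le that x l space_Q[OF x] by simp
      moreover have "(\<lambda>h. exp (l * gen_gap M n h x)) \<in> borel_measurable (Q x)"
        by (rule measurable_compose[OF gen_gap_measurable_in_h_Q[OF x]]) measurable
      ultimately show "integrable (Q x) (\<lambda>h. exp (l * gen_gap M n h x))"
        by (intro finite_measure_integrable_bounded[OF Q.finite_measure_axioms])
    qed
  qed
  finally show ?thesis .
qed

lemma gen_gap_tail_bound:
  assumes \<delta>: "0 < \<delta>"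
  shows "1 - \<delta> \<le> (\<integral>x. measure (Q x) {h \<in> space \<pi>.
                 gen_gap M n h x \<le> b * (c + sqrt (ln (1 / \<delta>) / (2 * real n)))} \<partial>S)"
    (is "_ \<le> (\<integral>x. measure (Q x) {h \<in> space \<pi>. gen_gap M n h x \<le> ?t} \<partial>S)")
proof (cases "\<delta> < 1 \<and> 0 < b")
  case True
  define r where "r = sqrt (ln (1 / \<delta>) / (2 * real n))"
  define l where "l = 2 * real n * (c + 2 * r) / b"
  have l: "0 < l" and exponent: "real n / 8 * (l * b / real n + 2 * c)\<^sup>2 - l * ?t \<le> ln \<delta>"
    using chernoff_exponent_le_ln[of "real n" b c \<delta>] n_pos True \<delta> c_nonneg
    unfolding l_def r_def by auto
  have "(\<integral>x. (\<integral>h. exp (l * gen_gap M n h x) \<partial>Q x) \<partial>S) \<le> exp (real n / 8 * (l * b / real n + 2 * c)\<^sup>2)"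
    using integral_exp_gap_le_exp_SUP_psi[of l] SUP_psi_gap_le[of l] l
    by (meson exp_le_cancel_iff less_imp_le order_trans)
  then have "exp (- (l * ?t)) * (\<integral>x. (\<integral>h. exp (l * gen_gap M n h x) \<partial>Q x) \<partial>S)
      \<le> exp (- (l * ?t)) * exp (real n / 8 * (l * b / real n + 2 * c)\<^sup>2)"
    by simp
  also have "\<dots> \<le> \<delta>"
    using exponent \<delta> by (simp flip: exp_add) (metis exp_le_cancel_iff exp_ln)
  finally show ?thesis
    using integral_prob_Q_gap_le_lower_bound[of l ?t] l by simp
next
  case False
  have "0 \<le> b"
    using space_pi_nonempty M.not_empty hypothesis_bounds by fastforce
  with False consider "1 \<le> \<delta>" | "b = 0" by linarith
  then show ?thesis
  proof cases
    case 1
    moreover have "0 \<le> (\<integral>x. measure (Q x) {h \<in> space \<pi>. gen_gap M n h x \<le> ?t} \<partial>S)"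
      by (simp add: integral_nonneg)
    ultimately show ?thesis by linarith
  next
    case 2
    have "measure (Q x) {h \<in> space \<pi>. gen_gap M n h x \<le> ?t} = 1" if x: "x \<in> space S" for x
    proof -
      have "{h \<in> space \<pi>. gen_gap M n h x \<le> ?t} = space (Q x)"
        using gen_gap_abs_le[OF _ x] 2 space_Q[OF x] by (auto simp: abs_le_iff)
      then show ?thesis using prob_space.prob_space[OF prob_space_Q[OF x]] by simp
    qed
    then show ?thesis
      using \<delta> by (simp add: S.prob_space cong: Bochner_Integration.integral_cong)
  qed
qed

end

theorem theorem4:
  fixes M :: "'x measure" and \<pi> :: "('x \<Rightarrow> real) measure"
    and Q :: "(nat \<Rightarrow> 'x) \<Rightarrow> ('x \<Rightarrow> real) measure"
    and H :: "('x \<Rightarrow> real) \<Rightarrow> (nat \<Rightarrow> 'x) \<Rightarrow> real"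
    and n :: nat and b c :: real
  assumes "prob_space M"
    and "n > 0"
    and "(\<lambda>(h, y). h y) \<in> borel_measurable (\<pi> \<Otimes>\<^sub>M M)"
    and "abs_cont_algorithm \<pi> (sample_space n M) Q"
    and "is_hamiltonian \<pi> (sample_space n M) Q H"
    and "\<forall>k<n. \<forall>h\<in>space \<pi>. \<forall>y\<in>space M. \<forall>y'\<in>space M. \<forall>x\<in>space (sample_space n M).
           diff_op k y y' H h x \<le> c"
    and "\<forall>h\<in>space \<pi>. \<forall>y\<in>space M. 0 \<le> h y \<and> h y \<le> b"
  shows "(\<forall>l>0.
            ln (\<integral>x. (\<integral>h. exp (l * gen_gap M n h x) \<partial>Q x) \<partial>sample_space n M)
              \<le> (SUP h\<in>space \<pi>. psi \<pi> (sample_space n M) H (\<lambda>h x. l * gen_gap M n h x) h)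
          \<and> (SUP h\<in>space \<pi>. psi \<pi> (sample_space n M) H (\<lambda>h x. l * gen_gap M n h x) h)
              \<le> real n / 8 * (l * b / real n + 2 * c)\<^sup>2)
       \<and> (\<forall>\<delta>>0.
            (\<integral>x. measure (Q x) {h \<in> space \<pi>.
                 gen_gap M n h x \<le> b * (c + sqrt (ln (1 / \<delta>) / (2 * real n)))} \<partial>sample_space n M)
              \<ge> 1 - \<delta>)"
proof -
  interpret hamiltonian_algorithm M \<pi> Q H n b c
    by (rule hamiltonian_algorithm.intro[OF assms])
  show ?thesis
    using ln_integral_exp_gap_le_SUP_psi SUP_psi_gap_le gen_gap_tail_bound by auto
qed

end
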